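(* Let $k\geq 3$ be an integer and $\ell\geq 2$ an even integer, and let $G_1^{\{\ell,k\}}$ and $G_2^{\{\ell,k\}}$ be the indistinguishability graphs (for any fixed permutation $\sigma\neq\mathrm{id}$ of $[k]$). Then both $G_1^{\{\ell,k\}}$ and $G_2^{\{\ell,k\}}$ admit a proper $k$-coloring (hence are $k$-partially $k$-colorable), $\Delta_{E(G_1^{\{\ell,k\}})}=\Delta_{E(G_2^{\{\ell,k\}})}=k$, and every $k$-partial $k$-coloring of $G_1^{\{\ell,k\}}$ (resp. $G_2^{\{\ell,k\}}$) is a proper $k$-coloring of that graph.
   Context: Let $[m]=\{1,\dots,m\}$. A $k$-partial $c$-coloring of a graph $H=(V,E)$ is a map $\gamma:V\to\{1,\dots,c\}$ such that every vertex $v$ has at least $\min\{k,\deg_H(v)\}$ neighbors $u$ with $\gamma(u)\neq\gamma(v)$. For a graph $H$ with at least one edge, $\Delta_{E(H)}=\max_{\{u,v\}\in E(H)}\min\{\deg_H(u),\deg_H(v)\}$. Path of cliques: for permutations $\tau_1,\dots,\tau_{\ell-1}$ of $[k]$, $P(\tau_1,\dots,\tau_{\ell-1})$ has vertex set $[k]\times[\ell]$ and edges $\{(a,i),(b,i)\}$ for $a\neq b$, $i\in[\ell]$, and $\{(a,i),(b,i+1)\}$ for $i\in[\ell-1]$, $a,b\in[k]$, $b\neq\tau_i(a)$. The $k$-edge-gadget transformation: given a graph $G$ and for each edge a chosen ordered pair $(u,v)$, keep all vertices of $G$, delete each edge $\{u,v\}$, and add $k$ new vertices $(u,v,1),\dots,(u,v,k)$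 forming a clique together with edges $\{u,(u,v,j)\}$ for $j=1,\dots,k-1$ and $\{v,(u,v,k)\}$. Indistinguishability graphs: let $G_1=P(\tau_1,\dots,\tau_{\ell-1})$ with all $\tau_i=\mathrm{id}$, and $G_2=P(\tau_1',\dots,\tau_{\ell-1}')$ with $\tau_i'=\mathrm{id}$ for $i\neq \ell/2$ and $\tau'_{\ell/2}=\sigma$, where $\sigma$ is a fixed permutation of $[k]$ different from the identity. $G_1^{\{\ell,k\}}$ (resp. $G_2^{\{\ell,k\}}$) is obtained from $G_1$ (resp. $G_2$) by the $k$-edge-gadget transformation, where an edge $\{(a,i),(b,i)\}$ with $a<b$ is oriented as $((a,i),(b,i))$ and an edge $\{(a,i),(b,i+1)\}$ is oriented as $((a,i),(b,i+1))$. *)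

theory Defs
  imports "HOL-Combinatorics.Permutations"
begin

definition nbrs :: "'v set set \<Rightarrow> 'v \<Rightarrow> 'v set" where
  "nbrs E v = {u. {u, v} \<in> E \<and> u \<noteq> v}"

definition deg :: "'v set set \<Rightarrow> 'v \<Rightarrow> nat" where
  "deg E v = card (nbrs E v)"

definition partial_coloring :: "nat \<Rightarrow> nat \<Rightarrow> 'v set \<Rightarrow> 'v set set \<Rightarrow> ('v \<Rightarrow> nat) \<Rightarrow> bool" where
  "partial_coloring k c V E \<gamma> \<longleftrightarrow>
     (\<forall>v\<in>V. \<gamma> v \<in> {1..c}) \<and>
     (\<forall>v\<in>V. card {u \<in> nbrs E v. \<gamma> u \<noteq> \<gamma> v} \<ge> min k (deg E v))"

definition proper_coloring :: "nat \<Rightarrow> 'v set \<Rightarrow> 'v set set \<Rightarrow> ('v \<Rightarrow> nat) \<Rightarrow> bool" where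
  "proper_coloring c V E \<gamma> \<longleftrightarrow>
     (\<forall>v\<in>V. \<gamma> v \<in> {1..c}) \<and>
     (\<forall>u v. {u, v} \<in> E \<and> u \<noteq> v \<longrightarrow> \<gamma> u \<noteq> \<gamma> v)"

definition Delta_E :: "'v set set \<Rightarrow> nat" where
  "Delta_E E = Max {min (deg E u) (deg E v) | u v. {u, v} \<in> E \<and> u \<noteq> v}"

text \<open>Vertices (a,i) with a \<in> [k], i \<in> [l]. Arcs: ((a,i),(b,i)) for a<b, and
 ((a,i),(b,i+1)) for b \<noteq> \<tau> i a. The underlying edges are exactly those of P(\<tau>_1,...,\<tau>_{l-1}).\<close>
definition poc_V :: "nat \<Rightarrow> nat \<Rightarrow> (nat \<times> nat) set" where
  "poc_V k l = {1..k} \<times> {1..l}"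

definition poc_arcs :: "nat \<Rightarrow> nat \<Rightarrow> (nat \<Rightarrow> nat \<Rightarrow> nat) \<Rightarrow> ((nat \<times> nat) \<times> (nat \<times> nat)) set" where
  "poc_arcs k l \<tau> =
     {((a, i), (b, i)) | a b i. a \<in> {1..k} \<and> b \<in> {1..k} \<and> a < b \<and> i \<in> {1..l}} \<union>
     {((a, i), (b, i + 1)) | a b i. a \<in> {1..k} \<and> b \<in> {1..k} \<and> i \<in> {1..l - 1} \<and> b \<noteq> \<tau> i a}"

datatype 'v gvert = Orig 'v | Gad 'v 'v nat

definition gadget_V :: "nat \<Rightarrow> 'v set \<Rightarrow> ('v \<times> 'v) set \<Rightarrow> 'v gvert set" where
  "gadget_V k V D = Orig ` V \<union> {Gad u v j | u v j. (u, v) \<in> D \<and> j \<in> {1..k}}"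

definition gadget_E :: "nat \<Rightarrow> ('v \<times> 'v) set \<Rightarrow> 'v gvert set set" where
  "gadget_E k D =
     {{Gad u v j, Gad u v j'} | u v j j'. (u, v) \<in> D \<and> j \<in> {1..k} \<and> j' \<in> {1..k} \<and> j \<noteq> j'} \<union>
     {{Orig u, Gad u v j} | u v j. (u, v) \<in> D \<and> j \<in> {1..k - 1}} \<union>
     {{Orig v, Gad u v k} | u v. (u, v) \<in> D}"

definition tau1 :: "nat \<Rightarrow> nat \<Rightarrow> nat" where
  "tau1 = (\<lambda>i. id)"

definition tau2 :: "nat \<Rightarrow> (nat \<Rightarrow> nat) \<Rightarrow> nat \<Rightarrow> nat \<Rightarrow> nat" where
  "tau2 l \<sigma> = (\<lambda>i. if i = l div 2 then \<sigma> else id)"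

definition G1_V :: "nat \<Rightarrow> nat \<Rightarrow> (nat \<times> nat) gvert set" where
  "G1_V l k = gadget_V k (poc_V k l) (poc_arcs k l tau1)"
definition G1_E :: "nat \<Rightarrow> nat \<Rightarrow> (nat \<times> nat) gvert set set" where
  "G1_E l k = gadget_E k (poc_arcs k l tau1)"
definition G2_V :: "nat \<Rightarrow> nat \<Rightarrow> (nat \<Rightarrow> nat) \<Rightarrow> (nat \<times> nat) gvert set" where
  "G2_V l k \<sigma> = gadget_V k (poc_V k l) (poc_arcs k l (tau2 l \<sigma>))"
definition G2_E :: "nat \<Rightarrow> nat \<Rightarrow> (nat \<Rightarrow> nat) \<Rightarrow> (nat \<times> nat) gvert set set" where
  "G2_E l k \<sigma> = gadget_E k (poc_arcs k l (tau2 l \<sigma>))"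

end

theory Submission
  imports Defs
begin

text \<open>
  Every edge of a \<open>k\<close>-edge-gadget graph has an endpoint inside a gadget clique, and every
  gadget vertex has degree exactly \<open>k\<close>. Hence \<open>\<Delta>\<^sub>E = k\<close>, and a \<open>k\<close>-partial colouring must
  separate each gadget vertex from all of its neighbours, i.e. it is proper. Any proper
  \<open>k\<close>-colouring of the base graph extends to the gadget cliques; the path of cliques is
  coloured by \<open>(a, i) \<mapsto> a\<close>, and after the twist \<open>\<sigma>\<close> by \<open>(a, i) \<mapsto> \<sigma>\<inverse> a\<close>.
\<close>

lemma proper_coloring_imp_partial_coloring:
  assumes "proper_coloring c V E \<gamma>"
  shows "partial_coloring k c V E \<gamma>"
proof -
  have "{u \<in> nbrs E v. \<gamma> u \<noteq> \<gamma> v} = nbrs E v" for v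
    using assms unfolding proper_coloring_def nbrs_def by auto
  then show ?thesis
    using assms unfolding partial_coloring_def proper_coloring_def deg_def by auto
qed

lemma partial_coloring_low_degree_nbr:
  assumes "partial_coloring k c V E \<gamma>" "v \<in> V" "finite (nbrs E v)" "deg E v \<le> k"
    and "u \<in> nbrs E v"
  shows "\<gamma> u \<noteq> \<gamma> v"
proof -
  let ?S = "{u \<in> nbrs E v. \<gamma> u \<noteq> \<gamma> v}"
  have "min k (deg E v) \<le> card ?S"
    using assms(1,2) unfolding partial_coloring_def by blast
  then have "card (nbrs E v) \<le> card ?S"
    using assms(4) unfolding deg_def by simp
  moreover have "card ?S \<le> card (nbrs E v)"
    using assms(3) by (intro card_mono) auto
  ultimately have "?S = nbrs E v"
    using assms(3) by (intro card_subset_eq) auto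
  then show ?thesis using assms(5) by blast
qed

lemma Gad_in_gadget_V: "(u, v) \<in> D \<Longrightarrow> j \<in> {1..k} \<Longrightarrow> Gad u v j \<in> gadget_V k V D"
  unfolding gadget_V_def by blast

lemma nbrs_gadget_E_Gad:
  assumes "(u, v) \<in> D" "j \<in> {1..k}"
  shows "nbrs (gadget_E k D) (Gad u v j)
           = Gad u v ` ({1..k} - {j}) \<union> {if j < k then Orig u else Orig v}"
proof (intro equalityI subsetI)
  fix x assume "x \<in> nbrs (gadget_E k D) (Gad u v j)"
  then have x: "{x, Gad u v j} \<in> gadget_E k D" "x \<noteq> Gad u v j" unfolding nbrs_def by auto
  then show "x \<in> Gad u v ` ({1..k} - {j}) \<union> {if j < k then Orig u else Orig v}"
    using assms unfolding gadget_E_def by (auto simp: doubleton_eq_iff)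
next
  fix x assume "x \<in> Gad u v ` ({1..k} - {j}) \<union> {if j < k then Orig u else Orig v}"
  then consider (clique) i where "x = Gad u v i" "i \<in> {1..k}" "i \<noteq> j"
    | (tail) "j < k" "x = Orig u" | (head) "\<not> j < k" "x = Orig v"
    by (cases "j < k") force+
  then show "x \<in> nbrs (gadget_E k D) (Gad u v j)"
  proof cases
    case clique
    then show ?thesis using assms unfolding nbrs_def gadget_E_def by blast
  next
    case tail
    then have "{x, Gad u v j} \<in> {{Orig a, Gad a b i} | a b i. (a, b) \<in> D \<and> i \<in> {1..k - 1}}"
      using assms by (intro CollectI exI[of _ u] exI[of _ v] exI[of _ j]) auto
    then show ?thesis using tail unfolding nbrs_def gadget_E_def by auto
  next
    case head
    then show ?thesis using assms unfolding nbrs_def gadget_E_def by auto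
  qed
qed

lemma
  assumes "(u, v) \<in> D" "j \<in> {1..k}"
  shows finite_nbrs_gadget_E_Gad: "finite (nbrs (gadget_E k D) (Gad u v j))"
    and deg_gadget_E_Gad: "deg (gadget_E k D) (Gad u v j) = k"
proof -
  have "card (Gad u v ` ({1..k} - {j})) = k - 1"
    using assms by (simp add: card_image inj_on_def)
  moreover have "(if j < k then Orig u else Orig v) \<notin> Gad u v ` ({1..k} - {j})"
    by auto
  ultimately show "deg (gadget_E k D) (Gad u v j) = k"
    using assms unfolding deg_def nbrs_gadget_E_Gad[OF assms] by simp
  show "finite (nbrs (gadget_E k D) (Gad u v j))"
    unfolding nbrs_gadget_E_Gad[OF assms] by simp
qed

lemma gadget_E_edge_has_Gad_end:
  assumes "{x, y} \<in> gadget_E k D" "k \<ge> 1"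
  obtains u v j where "(u, v) \<in> D" "j \<in> {1..k}" "Gad u v j \<in> {x, y}"
  using assms unfolding gadget_E_def by (auto simp: doubleton_eq_iff)

lemma partial_coloring_gadget_imp_proper:
  assumes "partial_coloring k c (gadget_V k V D) (gadget_E k D) \<gamma>" "k \<ge> 1"
  shows "proper_coloring c (gadget_V k V D) (gadget_E k D) \<gamma>"
  unfolding proper_coloring_def
proof (intro conjI allI impI)
  show "\<forall>v\<in>gadget_V k V D. \<gamma> v \<in> {1..c}"
    using assms(1) unfolding partial_coloring_def by auto
  fix x y assume xy: "{x, y} \<in> gadget_E k D \<and> x \<noteq> y"
  then obtain u v j where uv: "(u, v) \<in> D" "j \<in> {1..k}" and "Gad u v j \<in> {x, y}"
    using gadget_E_edge_has_Gad_end assms(2) by blast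
  then obtain z where z: "{x, y} = {Gad u v j, z}" by auto
  have "z \<in> nbrs (gadget_E k D) (Gad u v j)"
    using xy z unfolding nbrs_def by (auto simp: doubleton_eq_iff insert_commute)
  then have "\<gamma> z \<noteq> \<gamma> (Gad u v j)"
    using partial_coloring_low_degree_nbr[OF assms(1) Gad_in_gadget_V[OF uv]]
      finite_nbrs_gadget_E_Gad[OF uv] deg_gadget_E_Gad[OF uv] by simp
  then show "\<gamma> x \<noteq> \<gamma> y" using z by (auto simp: doubleton_eq_iff)
qed

lemma Delta_E_gadget_E:
  assumes "(u, v) \<in> D" "k \<ge> 2"
  shows "Delta_E (gadget_E k D) = k"
proof -
  let ?E = "gadget_E k D"
  let ?S = "{min (deg ?E x) (deg ?E y) | x y. {x, y} \<in> ?E \<and> x \<noteq> y}"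
  have le: "s \<le> k" if "s \<in> ?S" for s
  proof -
    from that obtain x y where s: "s = min (deg ?E x) (deg ?E y)" "{x, y} \<in> ?E" by blast
    obtain u' v' j where uv': "(u', v') \<in> D" "j \<in> {1..k}" and "Gad u' v' j \<in> {x, y}"
      by (rule gadget_E_edge_has_Gad_end[OF s(2)]) (use assms(2) in simp)
    then have "s \<le> deg ?E (Gad u' v' j)" using s(1) by auto
    then show ?thesis using deg_gadget_E_Gad[OF uv'] by simp
  qed
  have "{Gad u v 1, Gad u v 2} \<in> ?E"
    unfolding gadget_E_def
    by (intro UnI1 CollectI exI[of _ u] exI[of _ v] exI[of _ 1] exI[of _ 2]) (use assms in auto)
  moreover have "min (deg ?E (Gad u v 1)) (deg ?E (Gad u v 2)) = k"
    using assms by (simp add: deg_gadget_E_Gad)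
  ultimately have "k \<in> ?S"
    by (intro CollectI exI[of _ "Gad u v 1"] exI[of _ "Gad u v 2"]) simp
  moreover have "finite ?S"
    using le by (intro finite_subset[of ?S "{..k}"]) auto
  ultimately show ?thesis unfolding Delta_E_def using le by (intro Max_eqI)
qed

text \<open>The \<open>k\<close>-th gadget vertex, the only one adjacent to the head \<open>v\<close>, takes the colour of the
  tail \<open>u\<close>; the other \<open>k - 1\<close> take the colours different from that of \<open>u\<close>.\<close>
fun gadget_coloring :: "nat \<Rightarrow> ('v \<Rightarrow> nat) \<Rightarrow> 'v gvert \<Rightarrow> nat" where
  "gadget_coloring k c (Orig w) = c w"
| "gadget_coloring k c (Gad u v j) = (if j = k then c u else if j < c u then j else j + 1)"

lemma proper_coloring_gadget_coloring:
  assumes "\<forall>w\<in>V. c w \<in> {1..k}" "D \<subseteq> V \<times> V" "\<forall>(u, v)\<in>D. c u \<noteq> c v"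
  shows "proper_coloring k (gadget_V k V D) (gadget_E k D) (gadget_coloring k c)"
  unfolding proper_coloring_def
proof (intro conjI allI impI ballI)
  fix x assume "x \<in> gadget_V k V D"
  then show "gadget_coloring k c x \<in> {1..k}"
    unfolding gadget_V_def using assms(1,2) by fastforce
next
  fix x y assume "{x, y} \<in> gadget_E k D \<and> x \<noteq> y"
  then show "gadget_coloring k c x \<noteq> gadget_coloring k c y"
    using assms(3) unfolding gadget_E_def by (auto simp: doubleton_eq_iff split: if_splits)
qed

lemma poc_arcs_subset: "poc_arcs k l \<tau> \<subseteq> poc_V k l \<times> poc_V k l"
  unfolding poc_arcs_def poc_V_def by auto

lemma poc_arcs_first_layer: "k \<ge> 2 \<Longrightarrow> l \<ge> 1 \<Longrightarrow> ((1, 1), (2, 1)) \<in> poc_arcs k l \<tau>"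
  unfolding poc_arcs_def by auto

lemma proper_arcs_tau1: "\<forall>(u, v)\<in>poc_arcs k l tau1. fst u \<noteq> fst v"
  unfolding poc_arcs_def tau1_def by auto

definition twisted_coloring :: "nat \<Rightarrow> (nat \<Rightarrow> nat) \<Rightarrow> nat \<times> nat \<Rightarrow> nat" where
  "twisted_coloring l \<sigma> = (\<lambda>(a, i). if i \<le> l div 2 then a else inv \<sigma> a)"

lemma twisted_coloring_range:
  "\<sigma> permutes {1..k} \<Longrightarrow> \<forall>w\<in>poc_V k l. twisted_coloring l \<sigma> w \<in> {1..k}"
  unfolding poc_V_def twisted_coloring_def using permutes_in_image permutes_inv by fastforce

lemma proper_arcs_tau2:
  assumes "\<sigma> permutes {1..k}"
  shows "\<forall>(u, v)\<in>poc_arcs k l (tau2 l \<sigma>). twisted_coloring l \<sigma> u \<noteq> twisted_coloring l \<sigma> v"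
proof -
  have "inj (inv \<sigma>)" using permutes_inj[OF permutes_inv[OF assms]] .
  moreover have "inv \<sigma> b = a \<Longrightarrow> b = \<sigma> a" for a b
    using permutes_inverses(1)[OF assms] by metis
  ultimately show ?thesis
    unfolding poc_arcs_def tau2_def twisted_coloring_def
    using permutes_inverses(1)[OF assms] by (auto simp: inj_eq split: if_splits)
qed

theorem mainTheorem10:
  fixes k l :: nat and \<sigma> :: "nat \<Rightarrow> nat"
  assumes "k \<ge> 3" and "l \<ge> 2" and "even l"
    and "\<sigma> permutes {1..k}" and "\<sigma> \<noteq> id"
  shows "(\<exists>\<gamma>. proper_coloring k (G1_V l k) (G1_E l k) \<gamma>)
       \<and> (\<exists>\<gamma>. proper_coloring k (G2_V l k \<sigma>) (G2_E l k \<sigma>) \<gamma>)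
       \<and> (\<exists>\<gamma>. partial_coloring k k (G1_V l k) (G1_E l k) \<gamma>)
       \<and> (\<exists>\<gamma>. partial_coloring k k (G2_V l k \<sigma>) (G2_E l k \<sigma>) \<gamma>)
       \<and> Delta_E (G1_E l k) = k \<and> Delta_E (G2_E l k \<sigma>) = k
       \<and> (\<forall>\<gamma>. partial_coloring k k (G1_V l k) (G1_E l k) \<gamma>
               \<longrightarrow> proper_coloring k (G1_V l k) (G1_E l k) \<gamma>)
       \<and> (\<forall>\<gamma>. partial_coloring k k (G2_V l k \<sigma>) (G2_E l k \<sigma>) \<gamma>
               \<longrightarrow> proper_coloring k (G2_V l k \<sigma>) (G2_E l k \<sigma>) \<gamma>)"
proof -
  have proper1: "proper_coloring k (G1_V l k) (G1_E l k) (gadget_coloring k fst)"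
    unfolding G1_V_def G1_E_def
    by (rule proper_coloring_gadget_coloring[OF _ poc_arcs_subset proper_arcs_tau1])
      (auto simp: poc_V_def)
  have proper2: "proper_coloring k (G2_V l k \<sigma>) (G2_E l k \<sigma>)
                   (gadget_coloring k (twisted_coloring l \<sigma>))"
    unfolding G2_V_def G2_E_def
    by (rule proper_coloring_gadget_coloring[OF twisted_coloring_range[OF assms(4)]
          poc_arcs_subset proper_arcs_tau2[OF assms(4)]])
  have arc: "((1, 1), (2, 1)) \<in> poc_arcs k l \<tau>" for \<tau>
    using assms(1,2) by (intro poc_arcs_first_layer) auto
  have "Delta_E (G1_E l k) = k" "Delta_E (G2_E l k \<sigma>) = k"
    unfolding G1_E_def G2_E_def using assms(1) by (simp_all add: Delta_E_gadget_E[OF arc])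
  then show ?thesis
    using proper1 proper2 proper_coloring_imp_partial_coloring[OF proper1]
      proper_coloring_imp_partial_coloring[OF proper2]
      partial_coloring_gadget_imp_proper[where k = k] assms(1)
    unfolding G1_V_def G1_E_def G2_V_def G2_E_def by auto
qed

end
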